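(* Let $a>0$, $\theta\in(0,\pi/2)$ and $\theta_0\in[\theta,\pi/2)$. For all $w\in\mathbb{C}$ with $w\neq0$ and $-\theta_0+\theta\le\mathrm{Arg}(w)\le\theta_0$, and all $s\in\mathbb{R}$, $$|R(w,\tau_\theta(s)-a)|^2\ge\cos(\theta_0)\big(|w|^2+|\tau_\theta(s)-a|^2\big)\ge\cos^2(\theta_0)\big(|w|^2+|\tau_\theta(s)-a|^2\big).$$ Further, there exists $C>0$ depending only on $a$ and $\theta$ such that, for all $s\in\mathbb{R}$ and all $w\neq0$ with $0\le\mathrm{Arg}(w)\le\theta$, $$\Im\big(R(w,\tau_\theta(s)-a)\big)\ge[\cos(\theta-\mathrm{Arg}(w))]^{1/2}\Im(w)-C\ge\cos(\theta-\mathrm{Arg}(w))\Im(w)-C.$$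
   Context: Square roots are principal ($\sqrt z=|z|^{1/2}e^{i\mathrm{Arg}(z)/2}$, $\mathrm{Arg}(z)\in(-\pi,\pi]$) and $R(\hat z,z)=(\hat z^2+z^2)^{1/2}$ for $\hat z,z\in\mathbb{C}$. $\tau_\theta(s)=-a+(s+a)e^{i\theta}$ for $s<-a$, $s$ for $|s|\le a$, $a+(s-a)e^{i\theta}$ for $s>a$. *)

theory Defs
  imports "HOL-Analysis.Analysis"
begin

text \<open>Principal square root: csqrt is the principal branch (Arg in (-pi,pi]).\<close>
definition R :: "complex \<Rightarrow> complex \<Rightarrow> complex" where
  "R zh z = csqrt (zh\<^sup>2 + z\<^sup>2)"

definition tau :: "real \<Rightarrow> real \<Rightarrow> real \<Rightarrow> complex" where
  "tau a \<theta> s =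
     (if s < -a then - complex_of_real a + complex_of_real (s + a) * exp (\<i> * complex_of_real \<theta>)
      else if s \<le> a then complex_of_real s
      else complex_of_real a + complex_of_real (s - a) * exp (\<i> * complex_of_real \<theta>))"

end

theory Submission
  imports Defs
begin

(* Write z = tau s - a. In all three cases z^2 = (b + t e^(i theta))^2 with 0 <= b <= 2a and
   t >= 0, so w^2 + z^2 is a combination, with nonnegative coefficients, of unit vectors with
   arguments 2 Arg w, 0, theta and 2 theta. These all lie within theta0 of one direction, and
   projecting onto it gives the first inequality.
   For the second, first take b = 0: then y = w^2 + (t e^(i theta))^2 has argument in
   [2 Arg w, 2 theta], so Arg (sqrt y) >= Arg w, while |y| >= cos (theta - Arg w) |w|^2; hence
   Im (sqrt y) >= cos (theta - Arg w)^(1/2) Im w. Adding b^2 + 2bt e^(i theta) moves the root by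
   at most a constant: |sqrt x - sqrt y| is bounded both by |x - y|^(1/2) and by
   |x - y| / |sqrt y|, where |x - y| = O(1 + t) and |sqrt y| >= cos(theta)^(1/2) t. *)

lemma power2_cis: "(cis x)\<^sup>2 = cis (2 * x)"
  using Complex.DeMoivre[of x 2] by simp

lemma power2_eq_rcis: "w\<^sup>2 = rcis ((cmod w)\<^sup>2) (2 * Arg w)"
  by (metis DeMoivre2 rcis_cmod_Arg of_nat_numeral)

lemma power2_of_real_add_cis:
  "(of_real b + of_real t * cis \<theta>)\<^sup>2 =
     of_real (b\<^sup>2) * cis 0 + of_real (2 * b * t) * cis \<theta> + of_real (t\<^sup>2) * cis (2 * \<theta>)"
  by (simp add: power2_eq_square cis_mult algebra_simps flip: mult_2)

lemma norm_of_real_add_cis_le: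
  assumes "0 \<le> b" "0 \<le> t"
  shows "cmod (of_real b + of_real t * cis \<theta>) \<le> b + t"
  using norm_triangle_ineq[of "of_real b" "of_real t * cis \<theta>"] assms by (simp add: norm_mult)

lemma Re_cis_mult_of_real_cis_ge:
  assumes "0 \<le> c" "\<bar>\<alpha> - \<mu>\<bar> \<le> \<beta>" "\<beta> \<le> pi"
  shows "cos \<beta> * c \<le> Re (cis (-\<mu>) * (of_real c * cis \<alpha>))"
proof -
  have "cos \<beta> \<le> cos \<bar>\<alpha> - \<mu>\<bar>"
    using assms by (subst cos_mono_le_eq) auto
  then have "cos \<beta> * c \<le> c * cos (\<alpha> - \<mu>)"
    using assms(1) by (simp add: mult.commute mult_left_mono)
  then show ?thesis
    by (simp add: cos_diff algebra_simps)
qed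

lemma cos_mult_sum_le_norm_sum_cis:
  fixes xs :: "(real \<times> real) list"
  assumes "\<beta> \<le> pi" and "\<And>c \<alpha>. (c, \<alpha>) \<in> set xs \<Longrightarrow> 0 \<le> c \<and> \<bar>\<alpha> - \<mu>\<bar> \<le> \<beta>"
  shows "cos \<beta> * (\<Sum>(c, \<alpha>)\<leftarrow>xs. c) \<le> cmod (\<Sum>(c, \<alpha>)\<leftarrow>xs. of_real c * cis \<alpha>)"
proof -
  have "cos \<beta> * (\<Sum>(c, \<alpha>)\<leftarrow>xs. c) \<le> Re (cis (-\<mu>) * (\<Sum>(c, \<alpha>)\<leftarrow>xs. of_real c * cis \<alpha>))"
    using assms(2)
  proof (induction xs)
    case (Cons x xs)
    obtain c \<alpha> where x: "x = (c, \<alpha>)" by fastforce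
    have "cos \<beta> * c \<le> Re (cis (-\<mu>) * (of_real c * cis \<alpha>))"
      using Cons.prems[of c \<alpha>] assms(1) x by (intro Re_cis_mult_of_real_cis_ge) auto
    moreover have "cos \<beta> * (\<Sum>(c, \<alpha>)\<leftarrow>xs. c) \<le> Re (cis (-\<mu>) * (\<Sum>(c, \<alpha>)\<leftarrow>xs. of_real c * cis \<alpha>))"
      by (rule Cons.IH) (use Cons.prems in auto)
    ultimately show ?case
      by (simp only: x list.map sum_list.Cons case_prod_conv distrib_left plus_complex.sel add_mono)
  qed simp
  also have "\<dots> \<le> cmod (cis (-\<mu>) * (\<Sum>(c, \<alpha>)\<leftarrow>xs. of_real c * cis \<alpha>))"
    by (rule complex_Re_le_cmod)
  finally show ?thesis by (simp add: norm_mult)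
qed

lemma cos_mult_sum_norm_sq_le_norm_sum_sq:
  assumes "0 \<le> \<theta>" "\<theta> \<le> \<theta>\<^sub>0" "\<theta>\<^sub>0 \<le> pi / 2" "\<theta> - \<theta>\<^sub>0 \<le> Arg w" "Arg w \<le> \<theta>\<^sub>0"
    and "0 \<le> b" "0 \<le> t"
  defines "v \<equiv> of_real b + of_real t * cis \<theta>"
  shows "cos \<theta>\<^sub>0 * ((cmod w)\<^sup>2 + (cmod v)\<^sup>2) \<le> cmod (w\<^sup>2 + v\<^sup>2)"
proof -
  define \<phi> where "\<phi> = Arg w"
  obtain \<mu> where \<mu>: "\<bar>2 * \<phi> - \<mu>\<bar> \<le> \<theta>\<^sub>0" "\<bar>0 - \<mu>\<bar> \<le> \<theta>\<^sub>0"
    "\<bar>\<theta> - \<mu>\<bar> \<le> \<theta>\<^sub>0" "\<bar>2 * \<theta> - \<mu>\<bar> \<le> \<theta>\<^sub>0"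
  proof -
    have bounds: "\<theta> - \<theta>\<^sub>0 \<le> \<phi>" "\<phi> \<le> \<theta>\<^sub>0" "0 \<le> \<theta>" "\<theta> \<le> \<theta>\<^sub>0"
      using assms by (simp_all add: \<phi>_def)
    (* \<mu> is the midpoint of the smallest interval containing 2 \<phi>, 0, \<theta> and 2 \<theta> *)
    consider "\<phi> \<le> 0" | "0 \<le> \<phi>" "\<phi> \<le> \<theta>" | "\<theta> \<le> \<phi>" by linarith
    then show thesis
    proof cases
      case 1
      show ?thesis
        by (rule that[of "\<theta> + \<phi>"]; unfold abs_le_iff; use 1 bounds in linarith)
    next
      case 2
      show ?thesis
        by (rule that[of \<theta>]; unfold abs_le_iff; use 2 bounds in linarith)
    next
      case 3
      show ?thesis
        by (rule that[of \<phi>]; unfold abs_le_iff; use 3 bounds in linarith)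
    qed
  qed
  define xs where "xs = [((cmod w)\<^sup>2, 2 * \<phi>), (b\<^sup>2, 0), (2 * b * t, \<theta>), (t\<^sup>2, 2 * \<theta>)]"
  have "(cmod v)\<^sup>2 \<le> (b + t)\<^sup>2"
    using norm_of_real_add_cis_le[OF assms(6,7)] by (simp add: v_def power_mono)
  moreover have "0 \<le> cos \<theta>\<^sub>0"
    using assms by (intro cos_ge_zero) auto
  ultimately have "cos \<theta>\<^sub>0 * ((cmod w)\<^sup>2 + (cmod v)\<^sup>2) \<le> cos \<theta>\<^sub>0 * (\<Sum>(c, \<alpha>)\<leftarrow>xs. c)"
    by (intro mult_left_mono) (auto simp: xs_def power2_sum)
  also have "\<dots> \<le> cmod (\<Sum>(c, \<alpha>)\<leftarrow>xs. of_real c * cis \<alpha>)"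
    using \<mu> assms by (intro cos_mult_sum_le_norm_sum_cis) (auto simp: xs_def)
  also have "(\<Sum>(c, \<alpha>)\<leftarrow>xs. of_real c * cis \<alpha>) = w\<^sup>2 + v\<^sup>2"
    unfolding v_def power2_of_real_add_cis power2_eq_rcis[of w]
    by (simp add: xs_def \<phi>_def rcis_def add.assoc)
  finally show ?thesis .
qed

lemma cos_mult_sum_norm_sq_le_norm_sum_sq_cis:
  assumes "0 \<le> Arg w" "Arg w \<le> \<theta>" "\<theta> \<le> pi"
  shows "cos (\<theta> - Arg w) * ((cmod w)\<^sup>2 + t\<^sup>2) \<le> cmod (w\<^sup>2 + (of_real t * cis \<theta>)\<^sup>2)"
proof -
  define xs where "xs = [((cmod w)\<^sup>2, 2 * Arg w), (t\<^sup>2, 2 * \<theta>)]"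
  have "cos (\<theta> - Arg w) * (\<Sum>(c, \<alpha>)\<leftarrow>xs. c) \<le> cmod (\<Sum>(c, \<alpha>)\<leftarrow>xs. of_real c * cis \<alpha>)"
    using assms by (intro cos_mult_sum_le_norm_sum_cis[where \<mu> = "Arg w + \<theta>"]) (auto simp: xs_def)
  moreover have "(\<Sum>(c, \<alpha>)\<leftarrow>xs. of_real c * cis \<alpha>) = w\<^sup>2 + (of_real t * cis \<theta>)\<^sup>2"
    using power2_of_real_add_cis[of 0 t \<theta>] by (simp add: xs_def power2_eq_rcis[of w] rcis_def)
  ultimately show ?thesis by (simp add: xs_def)
qed

lemma Im_sum_sq_nonneg:
  assumes "0 \<le> Arg w" "Arg w \<le> pi / 2" "0 \<le> \<theta>" "\<theta> \<le> pi / 2" "0 \<le> b" "0 \<le> t"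
  shows "0 \<le> Im (w\<^sup>2 + (of_real b + of_real t * cis \<theta>)\<^sup>2)"
proof -
  have "0 \<le> sin (2 * Arg w)" "0 \<le> sin \<theta>" "0 \<le> sin (2 * \<theta>)"
    using assms by (auto intro!: sin_ge_zero)
  then show ?thesis
    unfolding power2_of_real_add_cis power2_eq_rcis[of w] using assms by simp
qed

lemma Im_csqrt_nonneg: "0 \<le> Im z \<Longrightarrow> 0 \<le> Im (csqrt z)"
  using complex_Re_le_cmod[of z] by (auto simp: sgn_if)

lemma norm_le_norm_add_first_quadrant:
  assumes "0 \<le> Re u" "0 \<le> Im u" "0 \<le> Re v" "0 \<le> Im v"
  shows "cmod (u - v) \<le> cmod (u + v)" and "cmod v \<le> cmod (u + v)"
proof -
  have sum: "(cmod (u + v))\<^sup>2 = (cmod u)\<^sup>2 + (cmod v)\<^sup>2 + 2 * (Re u * Re v + Im u * Im v)"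
    and diff: "(cmod (u - v))\<^sup>2 = (cmod u)\<^sup>2 + (cmod v)\<^sup>2 - 2 * (Re u * Re v + Im u * Im v)"
    unfolding cmod_power2 by (simp_all add: power2_diff power2_sum)
  have "0 \<le> Re u * Re v + Im u * Im v"
    using assms by simp
  then have "(cmod (u - v))\<^sup>2 \<le> (cmod (u + v))\<^sup>2" "(cmod v)\<^sup>2 \<le> (cmod (u + v))\<^sup>2"
    unfolding sum diff by simp_all
  then show "cmod (u - v) \<le> cmod (u + v)" "cmod v \<le> cmod (u + v)"
    by (simp_all add: power2_le_imp_le[OF _ norm_ge_zero])
qed

lemma norm_csqrt_diff_le:
  assumes "0 \<le> Im x" "0 \<le> Im y"
  shows "(cmod (csqrt x - csqrt y))\<^sup>2 \<le> cmod (x - y)"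
    and "cmod (csqrt x - csqrt y) * cmod (csqrt y) \<le> cmod (x - y)"
proof -
  have quadrant: "0 \<le> Re (csqrt x)" "0 \<le> Im (csqrt x)" "0 \<le> Re (csqrt y)" "0 \<le> Im (csqrt y)"
    using assms Re_csqrt Im_csqrt_nonneg by auto
  have "x - y = (csqrt x - csqrt y) * (csqrt x + csqrt y)"
    by (simp add: algebra_simps flip: power2_eq_square)
  then have eq: "cmod (x - y) = cmod (csqrt x - csqrt y) * cmod (csqrt x + csqrt y)"
    by (simp add: norm_mult)
  show "(cmod (csqrt x - csqrt y))\<^sup>2 \<le> cmod (x - y)"
    unfolding eq power2_eq_square
    using norm_le_norm_add_first_quadrant(1)[OF quadrant] by (simp add: mult_left_mono)
  show "cmod (csqrt x - csqrt y) * cmod (csqrt y) \<le> cmod (x - y)"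
    unfolding eq
    using norm_le_norm_add_first_quadrant(2)[OF quadrant] by (simp add: mult_left_mono)
qed

lemma norm_mult_sin_le_Im:
  assumes "0 \<le> Re v" "0 \<le> Im v" "0 \<le> \<phi>" "\<phi> < pi / 2" "0 \<le> Im ((v * cis (-\<phi>))\<^sup>2)"
  shows "cmod v * sin \<phi> \<le> Im v"
proof -
  define u where "u = v * cis (-\<phi>)"
  have cos_pos: "0 < cos \<phi>" and sin_nonneg: "0 \<le> sin \<phi>"
    using assms by (auto intro: cos_gt_zero_pi sin_ge_zero)
  have Re_u: "Re u = Re v * cos \<phi> + Im v * sin \<phi>" and Im_u: "Im u = Im v * cos \<phi> - Re v * sin \<phi>"
    by (simp_all add: u_def)
  have "0 \<le> Re u"
    unfolding Re_u using assms cos_pos sin_nonneg by simp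
  moreover have "0 \<le> Re u * Im u"
    using assms(5) by (simp add: u_def[symmetric] Im_power2 mult.commute)
  ultimately have "0 \<le> Im u"
  proof (cases "Re u = 0")
    case True
    then have "Re v = 0"
      using assms cos_pos sin_nonneg unfolding Re_u by (simp add: add_nonneg_eq_0_iff)
    then show ?thesis
      using assms(2) cos_pos unfolding Im_u by simp
  qed (simp add: zero_le_mult_iff)
  then have "(Re v * sin \<phi>)\<^sup>2 \<le> (Im v * cos \<phi>)\<^sup>2"
    unfolding Im_u using assms sin_nonneg by (intro power_mono) auto
  then have "(cmod v * sin \<phi>)\<^sup>2 \<le> (Im v * cos \<phi>)\<^sup>2 + (Im v * sin \<phi>)\<^sup>2"
    unfolding power_mult_distrib cmod_power2 by (simp add: distrib_right)
  also have "\<dots> = (Im v)\<^sup>2"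
    by (simp add: power_mult_distrib flip: distrib_left)
  finally show ?thesis
    using assms(2) by (rule power2_le_imp_le)
qed

lemma norm_mult_sin_Arg_le_Im_csqrt_sum_sq_cis:
  assumes "0 \<le> Arg w" "Arg w \<le> \<theta>" "\<theta> < pi / 2" "0 \<le> t"
  defines "y \<equiv> w\<^sup>2 + (of_real t * cis \<theta>)\<^sup>2"
  shows "cmod (csqrt y) * sin (Arg w) \<le> Im (csqrt y)"
proof -
  define \<phi> where "\<phi> = Arg w"
  have "0 \<le> Im y"
    using Im_sum_sq_nonneg[of w \<theta> 0 t] assms by (simp add: y_def)
  have "(csqrt y * cis (-\<phi>))\<^sup>2 = (of_real ((cmod w)\<^sup>2) * cis (2 * \<phi>) + of_real (t\<^sup>2) * cis (2 * \<theta>)) * cis (- 2 * \<phi>)"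
    by (simp add: y_def \<phi>_def power_mult_distrib power2_eq_rcis[of w] rcis_def power2_cis)
  also have "\<dots> = of_real ((cmod w)\<^sup>2) + of_real (t\<^sup>2) * cis (2 * (\<theta> - \<phi>))"
    by (simp only: distrib_right mult.assoc cis_mult) (simp add: algebra_simps)
  finally have "(csqrt y * cis (-\<phi>))\<^sup>2 = of_real ((cmod w)\<^sup>2) + of_real (t\<^sup>2) * cis (2 * (\<theta> - \<phi>))" .
  moreover have "0 \<le> sin (2 * (\<theta> - \<phi>))"
    using assms by (intro sin_ge_zero) (auto simp: \<phi>_def)
  ultimately show ?thesis
    using assms unfolding \<phi>_def[symmetric]
    by (intro norm_mult_sin_le_Im[OF Re_csqrt Im_csqrt_nonneg[OF \<open>0 \<le> Im y\<close>]]) (auto simp: \<phi>_def)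
qed

lemma Im_csqrt_sum_sq_cis_ge:
  assumes "0 \<le> Arg w" "Arg w \<le> \<theta>" "\<theta> < pi / 2" "0 \<le> t"
  shows "sqrt (cos (\<theta> - Arg w)) * Im w \<le> Im (csqrt (w\<^sup>2 + (of_real t * cis \<theta>)\<^sup>2))"
proof -
  define y where "y = w\<^sup>2 + (of_real t * cis \<theta>)\<^sup>2"
  have "sqrt (cos (\<theta> - Arg w)) * cmod w \<le> cmod (csqrt y)"
  proof -
    have "cos (\<theta> - Arg w) * (cmod w)\<^sup>2 \<le> cos (\<theta> - Arg w) * ((cmod w)\<^sup>2 + t\<^sup>2)"
      using assms by (intro mult_left_mono cos_ge_zero) auto
    also have "\<dots> \<le> cmod y"
      using cos_mult_sum_norm_sq_le_norm_sum_sq_cis[of w \<theta> t] assms by (simp add: y_def)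
    finally have "sqrt (cos (\<theta> - Arg w) * (cmod w)\<^sup>2) \<le> sqrt (cmod y)"
      by (rule real_sqrt_le_mono)
    then show ?thesis
      by (simp add: real_sqrt_mult)
  qed
  moreover have "0 \<le> sin (Arg w)"
    using assms by (intro sin_ge_zero) auto
  ultimately have "sqrt (cos (\<theta> - Arg w)) * cmod w * sin (Arg w) \<le> Im (csqrt y)"
    using norm_mult_sin_Arg_le_Im_csqrt_sum_sq_cis[OF assms] mult_right_mono order_trans
    unfolding y_def by blast
  moreover have "Im w = cmod w * sin (Arg w)"
    using Im_rcis[of "cmod w" "Arg w"] by (simp add: rcis_cmod_Arg)
  ultimately show ?thesis
    by (simp add: y_def mult.assoc)
qed

lemma le_divide_of_sq_le_and_mult_le:
  fixes d c t K :: real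
  assumes "0 \<le> d" "0 < c" "c \<le> 1" "1 \<le> K"
    and "d\<^sup>2 \<le> K * max 1 t" "d * (c * t) \<le> K * max 1 t"
  shows "d \<le> K / c"
proof (cases "t \<le> 1")
  case True
  then have "d\<^sup>2 \<le> K\<^sup>2"
    using assms by (simp add: power2_eq_square order_trans[OF _ mult_right_mono[of 1 K K]])
  then have "d \<le> K"
    by (rule power2_le_imp_le) (use assms(4) in linarith)
  also have "K \<le> K / c"
    using assms by (simp add: le_divide_eq mult_left_le)
  finally show ?thesis .
next
  case False
  then have "(d * c) * t \<le> K * t"
    using assms by (simp add: mult.assoc)
  then have "d * c \<le> K"
    using False by simp
  then show ?thesis
    using assms by (simp add: pos_le_divide_eq)
qed

lemma norm_power2_of_real_add_cis_diff_le:
  assumes "0 \<le> b" "b \<le> B" "0 \<le> t"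
  shows "cmod ((of_real b + of_real t * cis \<theta>)\<^sup>2 - (of_real t * cis \<theta>)\<^sup>2) \<le> (B + 1)\<^sup>2 * max 1 t"
proof -
  have "(of_real b + of_real t * cis \<theta>)\<^sup>2 - (of_real t * cis \<theta>)\<^sup>2
      = of_real (b\<^sup>2) + of_real (2 * b * t) * cis \<theta>"
    by (simp add: power2_eq_square algebra_simps)
  then have "cmod ((of_real b + of_real t * cis \<theta>)\<^sup>2 - (of_real t * cis \<theta>)\<^sup>2) \<le> b\<^sup>2 + 2 * b * t"
    using norm_triangle_ineq[of "of_real (b\<^sup>2)" "of_real (2 * b * t) * cis \<theta>"] assms
    by (simp only: norm_mult norm_of_real norm_cis) simp
  also have "\<dots> \<le> B\<^sup>2 * max 1 t + 2 * B * max 1 t"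
  proof (rule add_mono)
    have "b\<^sup>2 \<le> B\<^sup>2"
      using assms by (intro power_mono) auto
    also have "\<dots> \<le> B\<^sup>2 * max 1 t"
      using mult_left_mono[of 1 "max 1 t" "B\<^sup>2"] by simp
    finally show "b\<^sup>2 \<le> B\<^sup>2 * max 1 t" .
    show "2 * b * t \<le> 2 * B * max 1 t"
      using assms by (intro mult_mono) auto
  qed
  also have "\<dots> \<le> (B + 1)\<^sup>2 * max 1 t"
    by (simp add: power2_sum algebra_simps)
  finally show ?thesis .
qed

lemma sqrt_cos_mult_le_norm_csqrt_sum_sq_cis:
  assumes "0 \<le> Arg w" "Arg w \<le> \<theta>" "\<theta> < pi / 2" "0 \<le> t"
  shows "sqrt (cos \<theta>) * t \<le> cmod (csqrt (w\<^sup>2 + (of_real t * cis \<theta>)\<^sup>2))"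
proof -
  have "cos \<theta> * t\<^sup>2 \<le> cos (\<theta> - Arg w) * t\<^sup>2"
    using assms by (intro mult_right_mono) (auto simp: cos_mono_le_eq)
  also have "\<dots> \<le> cos (\<theta> - Arg w) * ((cmod w)\<^sup>2 + t\<^sup>2)"
    using assms by (intro mult_left_mono cos_ge_zero) auto
  also have "\<dots> \<le> cmod (w\<^sup>2 + (of_real t * cis \<theta>)\<^sup>2)"
    using cos_mult_sum_norm_sq_le_norm_sum_sq_cis[of w \<theta> t] assms by simp
  finally have "sqrt (cos \<theta> * t\<^sup>2) \<le> sqrt (cmod (w\<^sup>2 + (of_real t * cis \<theta>)\<^sup>2))"
    by (rule real_sqrt_le_mono)
  then show ?thesis
    using assms by (simp add: real_sqrt_mult)
qed

lemma Im_csqrt_sum_sq_ge: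
  assumes "0 \<le> Arg w" "Arg w \<le> \<theta>" "\<theta> < pi / 2" "0 \<le> b" "b \<le> B" "0 \<le> t"
  defines "v \<equiv> of_real b + of_real t * cis \<theta>"
  shows "sqrt (cos (\<theta> - Arg w)) * Im w - (B + 1)\<^sup>2 / sqrt (cos \<theta>) \<le> Im (csqrt (w\<^sup>2 + v\<^sup>2))"
proof -
  define x where "x = w\<^sup>2 + v\<^sup>2"
  define y where "y = w\<^sup>2 + (of_real t * cis \<theta>)\<^sup>2"
  define K where "K = (B + 1)\<^sup>2"
  define d where "d = cmod (csqrt x - csqrt y)"
  have Im_nonneg: "0 \<le> Im x" "0 \<le> Im y"
    using Im_sum_sq_nonneg[of w \<theta> b t] Im_sum_sq_nonneg[of w \<theta> 0 t] assms
    by (simp_all add: x_def y_def v_def)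
  have diff: "cmod (x - y) \<le> K * max 1 t"
    using norm_power2_of_real_add_cis_diff_le[of b B t \<theta>] assms by (simp add: x_def y_def v_def K_def)
  then have "d\<^sup>2 \<le> K * max 1 t"
    using norm_csqrt_diff_le(1)[OF Im_nonneg] by (simp add: d_def)
  moreover have "d * (sqrt (cos \<theta>) * t) \<le> K * max 1 t"
  proof -
    have "d * (sqrt (cos \<theta>) * t) \<le> d * cmod (csqrt y)"
      using sqrt_cos_mult_le_norm_csqrt_sum_sq_cis[OF assms(1-3,6)]
      by (simp add: d_def y_def mult_left_mono)
    also have "\<dots> \<le> cmod (x - y)"
      using norm_csqrt_diff_le(2)[OF Im_nonneg] by (simp add: d_def)
    finally show ?thesis
      using diff by linarith
  qed
  moreover have "0 < cos \<theta>"
    using assms by (intro cos_gt_zero_pi) auto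
  ultimately have "d \<le> K / sqrt (cos \<theta>)"
    using assms by (intro le_divide_of_sq_le_and_mult_le) (auto simp: d_def K_def)
  moreover have "Im (csqrt y) - d \<le> Im (csqrt x)"
    using abs_Im_le_cmod[of "csqrt x - csqrt y"] by (simp add: d_def)
  moreover have "sqrt (cos (\<theta> - Arg w)) * Im w \<le> Im (csqrt y)"
    using Im_csqrt_sum_sq_cis_ge assms by (simp add: y_def)
  ultimately show ?thesis
    by (simp add: x_def K_def)
qed

lemma tau_sub_square_eq:
  assumes "0 \<le> a"
  obtains b t where "0 \<le> b" "b \<le> 2 * a" "0 \<le> t"
    and "(tau a \<theta> s - of_real a)\<^sup>2 = (of_real b + of_real t * cis \<theta>)\<^sup>2"
proof -
  consider "s < -a" | "-a \<le> s" "s \<le> a" | "a < s" by linarith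
  then show thesis
  proof cases
    case 1
    then have "tau a \<theta> s - of_real a = - (of_real (2 * a) + of_real (- (s + a)) * cis \<theta>)"
      by (simp add: tau_def cis_conv_exp algebra_simps)
    then have "(tau a \<theta> s - of_real a)\<^sup>2 = (of_real (2 * a) + of_real (- (s + a)) * cis \<theta>)\<^sup>2"
      by (metis power2_minus)
    from that[OF _ _ _ this] show ?thesis
      using 1 assms by simp
  next
    case 2
    then have "(tau a \<theta> s - of_real a)\<^sup>2 = (of_real (a - s) + of_real 0 * cis \<theta>)\<^sup>2"
      by (simp add: tau_def power2_commute)
    from that[OF _ _ _ this] show ?thesis
      using 2 by simp
  next
    case 3
    then have "(tau a \<theta> s - of_real a)\<^sup>2 = (of_real 0 + of_real (s - a) * cis \<theta>)\<^sup>2"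
      using assms by (simp add: tau_def cis_conv_exp)
    from that[OF _ _ _ this] show ?thesis
      using 3 assms by simp
  qed
qed

lemma cos_mult_norm_sq_le_norm_sq_R_tau:
  assumes "0 \<le> a" "0 \<le> \<theta>" "\<theta> \<le> \<theta>\<^sub>0" "\<theta>\<^sub>0 \<le> pi / 2" "\<theta> - \<theta>\<^sub>0 \<le> Arg w" "Arg w \<le> \<theta>\<^sub>0"
  shows "cos \<theta>\<^sub>0 * ((cmod w)\<^sup>2 + (cmod (tau a \<theta> s - of_real a))\<^sup>2)
    \<le> (cmod (R w (tau a \<theta> s - of_real a)))\<^sup>2"
proof -
  obtain b t where "0 \<le> b" "b \<le> 2 * a" "0 \<le> t"
    and z: "(tau a \<theta> s - of_real a)\<^sup>2 = (of_real b + of_real t * cis \<theta>)\<^sup>2"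
    by (rule tau_sub_square_eq[OF assms(1)])
  moreover have "(cmod (tau a \<theta> s - of_real a))\<^sup>2 = (cmod (of_real b + of_real t * cis \<theta>))\<^sup>2"
    unfolding norm_power[symmetric] z ..
  ultimately show ?thesis
    using cos_mult_sum_norm_sq_le_norm_sum_sq[of \<theta> \<theta>\<^sub>0 w b t] assms by (simp add: R_def)
qed

lemma Im_R_tau_ge:
  assumes "0 \<le> a" "0 \<le> Arg w" "Arg w \<le> \<theta>" "\<theta> < pi / 2"
  shows "sqrt (cos (\<theta> - Arg w)) * Im w - (2 * a + 1)\<^sup>2 / sqrt (cos \<theta>)
    \<le> Im (R w (tau a \<theta> s - of_real a))"
proof -
  obtain b t where "0 \<le> b" "b \<le> 2 * a" "0 \<le> t"
    and z: "(tau a \<theta> s - of_real a)\<^sup>2 = (of_real b + of_real t * cis \<theta>)\<^sup>2"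
    by (rule tau_sub_square_eq[OF assms(1)])
  then show ?thesis
    using Im_csqrt_sum_sq_ge[of w \<theta> b "2 * a" t] assms by (simp add: R_def)
qed

lemma le_sqrt_self: "0 \<le> x \<Longrightarrow> x \<le> 1 \<Longrightarrow> x \<le> sqrt x"
  by (rule real_le_rsqrt) (simp add: power2_eq_square mult_left_le)

theorem lemmaB5:
  fixes a \<theta> \<theta>\<^sub>0 :: real
  assumes "a > 0" and "0 < \<theta>" and "\<theta> < pi / 2"
    and "\<theta> \<le> \<theta>\<^sub>0" and "\<theta>\<^sub>0 < pi / 2"
  shows "(\<forall>w s. w \<noteq> 0 \<and> - \<theta>\<^sub>0 + \<theta> \<le> Arg w \<and> Arg w \<le> \<theta>\<^sub>0 \<longrightarrow>
            (cmod (R w (tau a \<theta> s - complex_of_real a)))\<^sup>2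
              \<ge> cos \<theta>\<^sub>0 * ((cmod w)\<^sup>2 + (cmod (tau a \<theta> s - complex_of_real a))\<^sup>2)
          \<and> cos \<theta>\<^sub>0 * ((cmod w)\<^sup>2 + (cmod (tau a \<theta> s - complex_of_real a))\<^sup>2)
              \<ge> (cos \<theta>\<^sub>0)\<^sup>2 * ((cmod w)\<^sup>2 + (cmod (tau a \<theta> s - complex_of_real a))\<^sup>2))
       \<and> (\<exists>C > 0. \<forall>s w. w \<noteq> 0 \<and> 0 \<le> Arg w \<and> Arg w \<le> \<theta> \<longrightarrow>
            Im (R w (tau a \<theta> s - complex_of_real a))
              \<ge> sqrt (cos (\<theta> - Arg w)) * Im w - C
          \<and> sqrt (cos (\<theta> - Arg w)) * Im w - C \<ge> cos (\<theta> - Arg w) * Im w - C)"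
proof -
  define C where "C = (2 * a + 1)\<^sup>2 / sqrt (cos \<theta>)"
  have "0 < C"
    using assms by (simp add: C_def cos_gt_zero_pi)
  have "0 \<le> cos \<theta>\<^sub>0"
    using assms by (intro cos_ge_zero) auto
  show ?thesis
  proof (intro conjI allI impI exI[of _ C] \<open>0 < C\<close>)
    fix w s
    assume "w \<noteq> 0 \<and> - \<theta>\<^sub>0 + \<theta> \<le> Arg w \<and> Arg w \<le> \<theta>\<^sub>0"
    then show "(cmod (R w (tau a \<theta> s - of_real a)))\<^sup>2
        \<ge> cos \<theta>\<^sub>0 * ((cmod w)\<^sup>2 + (cmod (tau a \<theta> s - of_real a))\<^sup>2)"
      using assms by (intro cos_mult_norm_sq_le_norm_sq_R_tau) auto
    show "cos \<theta>\<^sub>0 * ((cmod w)\<^sup>2 + (cmod (tau a \<theta> s - of_real a))\<^sup>2)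
        \<ge> (cos \<theta>\<^sub>0)\<^sup>2 * ((cmod w)\<^sup>2 + (cmod (tau a \<theta> s - of_real a))\<^sup>2)"
      using \<open>0 \<le> cos \<theta>\<^sub>0\<close> by (intro mult_right_mono) (simp_all add: power2_eq_square mult_left_le)
  next
    fix s w
    assume w: "w \<noteq> 0 \<and> 0 \<le> Arg w \<and> Arg w \<le> \<theta>"
    then show "Im (R w (tau a \<theta> s - of_real a)) \<ge> sqrt (cos (\<theta> - Arg w)) * Im w - C"
      using assms Im_R_tau_ge[of a w \<theta> s] by (simp add: C_def)
    have "0 \<le> Im w"
      using w Arg_less_0 by blast
    then show "sqrt (cos (\<theta> - Arg w)) * Im w - C \<ge> cos (\<theta> - Arg w) * Im w - C"
      using w assms by (simp add: mult_right_mono le_sqrt_self cos_ge_zero)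
  qed
qed

end
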